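(* Let $n\ge3$, $i\in[n-2]$, and $m=n-i-1$. Let $p_{i,n}$ be the number of words $u$ of length $i$ with $i$ distinct letters from $[n]$ such that $[n]\setminus{\rm alph}(u)$ is periodic. Then $$p_{i,n}=\frac{q_{n,m}}{2}\,(r_{n,m}+i+1)\, i!,$$ where $q_{n,m}$ and $r_{n,m}$ are the quotient and remainder of the division of $n$ by $m$.
   Context: $[n]=\{1,\ldots,n\}$; ${\rm alph}(u)$ is the set of letters of $u$. A finite set $A\subset\mathbb P$ with $|A|\ge2$ is periodic if the differences between consecutive elements (in increasing order) are all equal. For integers $l$ and $m\ne0$, $l=q_{l,m}m+r_{l,m}$ with $0\le r_{l,m}<m$. *)

theory Defs
  imports Complex_Main
begin

definition periodic :: "nat set \<Rightarrow> bool" where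
  "periodic A \<longleftrightarrow> finite A \<and> 0 \<notin> A \<and> card A \<ge> 2 \<and>
     (let xs = sorted_list_of_set A in
        \<forall>j. j + 1 < length xs \<longrightarrow> xs ! (j + 1) - xs ! j = xs ! 1 - xs ! 0)"

definition p_count :: "nat \<Rightarrow> nat \<Rightarrow> nat" where
  "p_count i n = card {u :: nat list. length u = i \<and> distinct u \<and> set u \<subseteq> {1..n}
                        \<and> periodic ({1..n} - set u)}"

end

theory Submission
  imports Defs "HOL-Combinatorics.Multiset_Permutations"
begin

text \<open>A word with i distinct letters from [n] is a permutation of the complement of its
alphabet, so p_{i,n} is i! times the number of periodic subsets of [n] with m+1 elements.
These are exactly the arithmetic progressions a, a+d, ..., a+md with a \<ge> 1 and a+md \<le> n,
so for each difference d \<le> q_{n,m} there are n - md of them, and summing over d gives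
q(n - m(q+1)/2) = q(r + i + 1)/2 since n = qm + r and i + 1 = n - m.\<close>

definition arith_prog :: "nat \<Rightarrow> nat \<Rightarrow> nat \<Rightarrow> nat set" where
  "arith_prog a d m = (\<lambda>j. a + j * d) ` {..m}"

lemma sorted_list_of_set_arith_prog:
  assumes "d > 0"
  shows "sorted_list_of_set (arith_prog a d m) = map (\<lambda>j. a + j * d) [0..<Suc m]"
proof -
  have "sorted_wrt (<) (map (\<lambda>j. a + j * d) [0..<Suc m])"
    using assms by (auto simp: sorted_wrt_iff_nth_less simp del: upt_Suc)
  moreover have "set (map (\<lambda>j. a + j * d) [0..<Suc m]) = arith_prog a d m"
    by (auto simp: arith_prog_def simp del: upt_Suc)
  ultimately show ?thesis
    by (metis sorted_list_of_set.idem_if_sorted_distinct strict_sorted_iff subset_UNIV list.map_id)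
qed

lemma card_arith_prog:
  "d > 0 \<Longrightarrow> card (arith_prog a d m) = Suc m"
  by (metis length_sorted_list_of_set sorted_list_of_set_arith_prog length_map length_upt minus_nat.diff_0)

lemma arith_prog_subset_atLeastAtMost:
  "arith_prog a d m \<subseteq> {1..n} \<longleftrightarrow> 1 \<le> a \<and> a + m * d \<le> n"
proof
  assume "arith_prog a d m \<subseteq> {1..n}"
  moreover have "a \<in> arith_prog a d m" "a + m * d \<in> arith_prog a d m"
    unfolding arith_prog_def by force+
  ultimately show "1 \<le> a \<and> a + m * d \<le> n" by auto
next
  assume bounds: "1 \<le> a \<and> a + m * d \<le> n"
  show "arith_prog a d m \<subseteq> {1..n}"
  proof
    fix x assume "x \<in> arith_prog a d m"
    then obtain j where "j \<le> m" "x = a + j * d"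
      by (auto simp: arith_prog_def)
    moreover have "j * d \<le> m * d"
      using \<open>j \<le> m\<close> by simp
    ultimately have "1 \<le> x \<and> x \<le> n"
      using bounds by linarith
    then show "x \<in> {1..n}" by simp
  qed
qed

lemma periodic_arith_prog:
  assumes "a > 0" "d > 0" "m > 0"
  shows "periodic (arith_prog a d m)"
  using assms card_arith_prog[of d a m]
  unfolding periodic_def Let_def sorted_list_of_set_arith_prog[OF \<open>d > 0\<close>]
  by (auto simp: arith_prog_def simp del: upt_Suc)

lemma periodic_imp_arith_prog:
  assumes "periodic A" "card A = Suc m"
  obtains a d where "d > 0" "A = arith_prog a d m"
proof -
  define xs where "xs = sorted_list_of_set A"
  define a where "a = xs ! 0"
  define d where "d = xs ! 1 - xs ! 0"
  have "finite A" and "m > 0"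
    using assms unfolding periodic_def by auto
  then have len: "length xs = Suc m" and set_xs: "set xs = A"
    using assms(2) by (simp_all add: xs_def)
  have step: "xs ! (j + 1) - xs ! j = d" if "j + 1 < length xs" for j
    using assms(1) that unfolding periodic_def Let_def xs_def d_def by blast
  have incr: "xs ! j < xs ! (j + 1)" if "j + 1 < length xs" for j
    using that sorted_wrt_nth_less[OF strict_sorted_list_of_set, of j "j + 1" A]
    by (simp add: xs_def)
  have "d > 0"
    using step[of 0] incr[of 0] len \<open>m > 0\<close> by simp
  have nth_xs: "xs ! j = a + j * d" if "j < length xs" for j
    using that
  proof (induction j)
    case (Suc j)
    then show ?case
      using step[of j] incr[of j] by simp
  qed (simp add: a_def)
  have "xs = map (\<lambda>j. a + j * d) [0..<Suc m]"
    by (rule nth_equalityI) (simp_all add: len nth_xs del: upt_Suc)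
  then have "A = arith_prog a d m"
    using set_xs by (auto simp: arith_prog_def simp del: upt_Suc)
  with \<open>d > 0\<close> show thesis ..
qed

lemma arith_prog_inject:
  assumes "m > 0" "d > 0" "d' > 0" "arith_prog a d m = arith_prog a' d' m"
  shows "a = a' \<and> d = d'"
proof -
  have "map (\<lambda>j. a + j * d) [0..<Suc m] = map (\<lambda>j. a' + j * d') [0..<Suc m]"
    using assms sorted_list_of_set_arith_prog by metis
  then have "\<forall>j < Suc m. a + j * d = a' + j * d'"
    by (simp add: list_eq_iff_nth_eq del: upt_Suc)
  then have "a = a'" "a + d = a' + d'"
    using \<open>m > 0\<close> by (auto dest: spec[of _ 0] spec[of _ 1])
  then show ?thesis by simp
qed

lemma card_periodic_subsets_atLeastAtMost:
  assumes "m > 0"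
  shows "card {A. A \<subseteq> {1..n} \<and> card A = Suc m \<and> periodic A} = (\<Sum>d = 1..n div m. n - m * d)"
proof -
  let ?S = "SIGMA d:{1..n div m}. {1..n - m * d}"
  let ?f = "\<lambda>(d, a). arith_prog a d m"
  have params: "(d, a) \<in> ?S \<longleftrightarrow> d > 0 \<and> 1 \<le> a \<and> a + m * d \<le> n" for d a
  proof -
    have "d \<le> n div m \<longleftrightarrow> m * d \<le> n"
      using less_eq_div_iff_mult_less_eq[OF assms] by (simp add: mult.commute)
    then show ?thesis by auto
  qed
  have "{A. A \<subseteq> {1..n} \<and> card A = Suc m \<and> periodic A} = ?f ` ?S"
  proof (intro equalityI subsetI)
    fix A assume "A \<in> {A. A \<subseteq> {1..n} \<and> card A = Suc m \<and> periodic A}"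
    then have A: "A \<subseteq> {1..n}" "card A = Suc m" "periodic A" by auto
    then obtain a d where "d > 0" "A = arith_prog a d m"
      by (blast elim: periodic_imp_arith_prog)
    with A(1) have "1 \<le> a \<and> a + m * d \<le> n"
      using arith_prog_subset_atLeastAtMost by blast
    with \<open>d > 0\<close> have "(d, a) \<in> ?S"
      using params by blast
    with \<open>A = arith_prog a d m\<close> show "A \<in> ?f ` ?S"
      by (auto intro: image_eqI[of _ _ "(d, a)"])
  next
    fix A assume "A \<in> ?f ` ?S"
    then obtain a d where A: "A = arith_prog a d m" and "(d, a) \<in> ?S"
      by auto
    then have "d > 0" "1 \<le> a" "a + m * d \<le> n"
      using params by auto
    then have "A \<subseteq> {1..n}"
      unfolding A using arith_prog_subset_atLeastAtMost by blast
    with assms \<open>d > 0\<close> \<open>1 \<le> a\<close> show "A \<in> {A. A \<subseteq> {1..n} \<and> card A = Suc m \<and> periodic A}"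
      by (simp add: A card_arith_prog periodic_arith_prog)
  qed
  moreover have "inj_on ?f ?S"
  proof (rule inj_onI)
    fix x y assume "x \<in> ?S" "y \<in> ?S" "?f x = ?f y"
    moreover obtain d a d' a' where "x = (d, a)" "y = (d', a')"
      by fastforce
    ultimately show "x = y"
      using arith_prog_inject[OF assms, of d d' a a'] params by auto
  qed
  ultimately show ?thesis
    by (simp add: card_image)
qed

lemma card_distinct_words_by_complement:
  assumes "finite S" "i \<le> card S"
  shows "card {u. length u = i \<and> distinct u \<and> set u \<subseteq> S \<and> P (S - set u)}
       = card {A. A \<subseteq> S \<and> card A = card S - i \<and> P A} * fact i"
proof -
  let ?C = "{A. A \<subseteq> S \<and> card A = card S - i \<and> P A}"
  have words: "{u. length u = i \<and> distinct u \<and> set u \<subseteq> S \<and> P (S - set u)}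
             = (\<Union>A\<in>?C. permutations_of_set (S - A))"
  proof (intro equalityI subsetI)
    fix u assume u: "u \<in> {u. length u = i \<and> distinct u \<and> set u \<subseteq> S \<and> P (S - set u)}"
    then have "card (S - set u) = card S - i"
      using assms(1) by (auto simp: card_Diff_subset distinct_card)
    moreover have "S - (S - set u) = set u"
      using u by auto
    ultimately show "u \<in> (\<Union>A\<in>?C. permutations_of_set (S - A))"
      using u by (auto simp: permutations_of_set_def intro!: bexI[of _ "S - set u"])
  next
    fix u assume "u \<in> (\<Union>A\<in>?C. permutations_of_set (S - A))"
    then obtain A where A: "A \<subseteq> S" "card A = card S - i" "P A"
      and u: "set u = S - A" "distinct u"
      by (auto simp: permutations_of_set_def)
    have "length u = card S - card A"
      using u A assms(1) by (metis card_Diff_subset distinct_card finite_subset)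
    moreover have "S - set u = A"
      using u A by auto
    ultimately show "u \<in> {u. length u = i \<and> distinct u \<and> set u \<subseteq> S \<and> P (S - set u)}"
      using u A assms(2) by auto
  qed
  have "finite ?C"
    using assms(1) by (auto intro: finite_subset[of _ "Pow S"])
  moreover have "permutations_of_set (S - A) \<inter> permutations_of_set (S - B) = {}"
    if "A \<in> ?C" "B \<in> ?C" "A \<noteq> B" for A B
    using that by (auto simp: permutations_of_set_def)
  moreover have "card (permutations_of_set (S - A)) = fact i" if "A \<in> ?C" for A
    using that assms by (auto simp: card_Diff_subset finite_subset)
  ultimately show ?thesis
    unfolding words by (simp add: card_UN_disjoint)
qed

lemma real_sum_diff_mult:
  fixes n m q :: nat
  assumes "m * q \<le> n"
  shows "real (\<Sum>d = 1..q. n - m * d) = real q * real n - real m * real q * (real q + 1) / 2"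
  using assms
proof (induction q)
  case (Suc q)
  then show ?case
    by (simp add: of_nat_diff field_simps)
qed simp

theorem mainTheorem9:
  fixes n i m :: nat
  assumes "n \<ge> 3" and "i \<in> {1..n-2}" and "m = n - i - 1"
  shows "real (p_count i n) = real (n div m) / 2 * real (n mod m + i + 1) * fact i"
proof -
  define q r where "q = n div m" and "r = n mod m"
  have "m > 0" and card_compl: "n - i = Suc m"
    using assms by auto
  have "p_count i n = card {A. A \<subseteq> {1..n} \<and> card A = Suc m \<and> periodic A} * fact i"
    using card_distinct_words_by_complement[of "{1..n}" i periodic] assms(2) card_compl
    by (simp add: p_count_def)
  also have "\<dots> = (\<Sum>d = 1..q. n - m * d) * fact i"
    using card_periodic_subsets_atLeastAtMost[OF \<open>m > 0\<close>] by (simp add: q_def)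
  finally have count: "real (p_count i n)
      = (real q * real n - real m * real q * (real q + 1) / 2) * fact i"
    using real_sum_diff_mult[of m q n] by (simp add: q_def)
  have n_split: "real n = real m * real q + real r"
    by (simp add: q_def r_def flip: of_nat_mult of_nat_add)
  have factor: "real (n mod m + i + 1) = 2 * real r + real m * real q - real m"
    using n_split card_compl by (simp add: r_def flip: of_nat_diff)
  have "real (p_count i n) = real q / 2 * (2 * real r + real m * real q - real m) * fact i"
    unfolding count n_split by (simp add: field_simps)
  then show ?thesis
    unfolding factor q_def .
qed

end
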